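(* For every $d\in2\mathbb N$, every $\tau\in S_d$ and every $n\in\mathbb N$ with $n>d(p-1)+d(4p-4)+\frac{d^2}{2}(4p-4)+\frac d2$, $$\binom{n-d(p-1)-d(4p-4)-\frac{d^2}{2}(4p-4)}{d/2}\le N(d,n,\tau).$$
   Context: Fix an integer $p\ge2$; $F_p=\langle x_0,x_1,\dots\mid x_nx_k=x_kx_{n+p-1}\ \forall k<n\rangle$ with identity $e$. For $d\in\mathbb N$ and $[d]=\{1,\dots,d\}$, a word of length $d$ is a tuple $w=(x_{i(1)}^{\epsilon(1)},\dots,x_{i(d)}^{\epsilon(d)})$ with $i:[d]\to\mathbb N_0$, $\epsilon:[d]\to\{1,-1\}$, written $w=(i,\epsilon)$; $\mathrm{eval}(w)=x_{i(1)}^{\epsilon(1)}\cdots x_{i(d)}^{\epsilon(d)}$; $\mathcal W_0(d,n)$ is the set of words of length $d$ with $\mathrm{eval}(w)=e$ and $i$ taking values in $\{0,\dots,n-1\}$. Rewriting relations: ($\rightsquigarrow$) a consecutive pair $(x_a^{-1},x_b)$ is replaced by $(x_b,x_{a+p-1}^{-1})$ if $a>b$, by $(x_{b+p-1},x_a^{-1})$ if $a<b$, by $(x_b,x_a^{-1})$ if $a=b$; ($\rightarrowtail$, on $\rightsquigarrow$-irreducible words) $(x_a,x_b)$ with $b-p+1>a$ is replaced by $(x_{b-p+1},x_a)$, and $(x_a^{-1},x_b^{-1})$ with $a-p+1>b$ by $(x_b^{-1},x_{a-p+1}^{-1})$. The normal form $\mathrm{NF}(w)$ is obtained by applying $\rightsquigarrow$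 until irreducible and then $\rightarrowtail$ until irreducible (well defined). Each step swaps two adjacent letters; $\tau(w)\in S_d$ is defined by letting $\tau(w)(l)$ be the position in $\mathrm{NF}(w)$ of the letter originating from the $l$-th letter of $w$. For $\tau\in S_d$: $\mathcal W_0(d,n,\tau)=\{w\in\mathcal W_0(d,n):\tau(w)=\tau\}$ and $N(d,n,\tau)=|\mathcal W_0(d,n,\tau)|$. *)

theory Defs
  imports "HOL-Combinatorics.Permutations"
begin

text \<open>A letter x_i^eps is encoded as (i, b) with b = True for eps = 1 and b = False for eps = -1.\<close>
type_synonym letter = "nat \<times> bool"

text \<open>Equality in F_p = < x_0, x_1, ... | x_n x_k = x_k x_(n+p-1), k < n >:
  the congruence on words generated by free cancellation and the defining relations.
  eval u = eval v in F_p iff Fp_eq p u v.\<close>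
inductive Fp_eq :: "nat \<Rightarrow> letter list \<Rightarrow> letter list \<Rightarrow> bool" for p where
  refl: "Fp_eq p w w"
| sym: "Fp_eq p u v \<Longrightarrow> Fp_eq p v u"
| trans: "Fp_eq p u v \<Longrightarrow> Fp_eq p v w \<Longrightarrow> Fp_eq p u w"
| cancel: "Fp_eq p (u @ [(a, s), (a, \<not> s)] @ v) (u @ v)"
| rel: "k < m \<Longrightarrow>
    Fp_eq p (u @ [(m, True), (k, True)] @ v) (u @ [(k, True), (m + p - 1, True)] @ v)"

definition eval_trivial :: "nat \<Rightarrow> letter list \<Rightarrow> bool" where
  "eval_trivial p w \<longleftrightarrow> Fp_eq p w []"

definition W0 :: "nat \<Rightarrow> nat \<Rightarrow> nat \<Rightarrow> letter list set" where
  "W0 p d n = {w. length w = d \<and> (\<forall>x\<in>set w. fst x < n) \<and> eval_trivial p w}"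

text \<open>Labelled words: each letter carries the (1-based) position it originates from.\<close>
type_synonym lword = "(letter \<times> nat) list"

inductive sq_step :: "nat \<Rightarrow> lword \<Rightarrow> lword \<Rightarrow> bool" for p where
  gt: "a > b \<Longrightarrow> sq_step p (u @ [((a, False), l), ((b, True), m)] @ v)
                              (u @ [((b, True), m), ((a + p - 1, False), l)] @ v)"
| lt: "a < b \<Longrightarrow> sq_step p (u @ [((a, False), l), ((b, True), m)] @ v)
                              (u @ [((b + p - 1, True), m), ((a, False), l)] @ v)"
| eq: "a = b \<Longrightarrow> sq_step p (u @ [((a, False), l), ((b, True), m)] @ v)
                              (u @ [((b, True), m), ((a, False), l)] @ v)"

text \<open>The rewriting relation >-> (tail arrow); the condition b - p + 1 > a is written
  a + p - 1 < b (equivalent over the integers), similarly for the inverse case.\<close>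
inductive tl_step :: "nat \<Rightarrow> lword \<Rightarrow> lword \<Rightarrow> bool" for p where
  pos: "a + p - 1 < b \<Longrightarrow> tl_step p (u @ [((a, True), l), ((b, True), m)] @ v)
                              (u @ [((b + 1 - p, True), m), ((a, True), l)] @ v)"
| neg: "b + p - 1 < a \<Longrightarrow> tl_step p (u @ [((a, False), l), ((b, False), m)] @ v)
                              (u @ [((b, False), m), ((a + 1 - p, False), l)] @ v)"

definition NF_rel :: "nat \<Rightarrow> lword \<Rightarrow> lword \<Rightarrow> bool" where
  "NF_rel p w u \<longleftrightarrow> (\<exists>v. (sq_step p)\<^sup>*\<^sup>* w v \<and> \<not> (\<exists>v'. sq_step p v v') \<and>
                          (tl_step p)\<^sup>*\<^sup>* v u \<and> \<not> (\<exists>u'. tl_step p u u'))"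

definition label :: "letter list \<Rightarrow> lword" where
  "label w = zip w [1..<Suc (length w)]"

text \<open>position (1-based) in u of the letter with label l (identity outside the labels)\<close>
definition pos_fun :: "lword \<Rightarrow> nat \<Rightarrow> nat" where
  "pos_fun u l = (if \<exists>j<length u. snd (u ! j) = l
                  then Suc (THE j. j < length u \<and> snd (u ! j) = l) else l)"

definition tau :: "nat \<Rightarrow> letter list \<Rightarrow> nat \<Rightarrow> nat" where
  "tau p w = (THE t. \<exists>u. NF_rel p (label w) u \<and> t = pos_fun u)"

definition W0_tau :: "nat \<Rightarrow> nat \<Rightarrow> nat \<Rightarrow> (nat \<Rightarrow> nat) \<Rightarrow> letter list set" where
  "W0_tau p d n t = {w \<in> W0 p d n. tau p w = t}"

definition N :: "nat \<Rightarrow> nat \<Rightarrow> nat \<Rightarrow> (nat \<Rightarrow> nat) \<Rightarrow> nat" where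
  "N p d n t = card (W0_tau p d n t)"

end

theory Submission
  imports Defs
begin

text \<open>
  Let \<open>k = d/2\<close> and \<open>M = n - (p - 1)(10k + 8k\<^sup>2)\<close>. To each \<open>k\<close>-subset
  \<open>c\<^sub>0 < \<dots> < c\<^bsub>k-1\<^esub>\<close> of \<open>{0..<M}\<close> we attach a word whose letter of level \<open>r\<close> (the letter
  that is to end up \<open>r\<close> places away from the centre of the normal form, on the side dictated by
  \<open>\<tau>\<close>) has index close to \<open>anchor r = c\<^sub>r + (6r + 3)(p - 1)k\<close>. Every rewriting step moves an
  index by \<open>p - 1\<close> and only when crossing a letter of lower level, so indices never leave a
  window of radius \<open>3(p - 1)r\<close> around the anchor; since the windows of different levels are
  more than \<open>p - 1\<close> apart, every step is decided by comparing levels. Hence \<open>\<leadsto>\<close> moves the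
  positive letters in front of the inverse ones, \<open>\<rightarrowtail>\<close> sorts both blocks by level, and the
  letters land at the positions prescribed by \<open>\<tau>\<close>. Small corrections to the initial indices of
  inverse letters make the two letters of each level end with the same index, so the normal
  form is \<open>x\<^bsub>f(k-1)\<^esub> \<cdots> x\<^bsub>f(0)\<^esub> x\<^bsub>f(0)\<^esub>\<^sup>-\<^sup>1 \<cdots> x\<^bsub>f(k-1)\<^esub>\<^sup>-\<^sup>1\<close> and the word evaluates
  to \<open>e\<close>. A positive letter keeps its anchor as initial index, so the word determines the
  subset, giving \<open>M choose k\<close> distinct elements of \<open>W\<^sub>0(d, n, \<tau>)\<close>.
\<close>

fun precedes :: "nat list \<Rightarrow> nat \<Rightarrow> nat \<Rightarrow> bool" where
  "precedes [] a b = False"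
| "precedes (z # zs) a b = ((z = a \<and> b \<in> set zs) \<or> precedes zs a b)"

lemma precedes_append:
  "precedes (xs @ ys) a b \<longleftrightarrow> precedes xs a b \<or> precedes ys a b \<or> (a \<in> set xs \<and> b \<in> set ys)"
  by (induction xs) auto

lemma precedes_in_set: "precedes xs a b \<Longrightarrow> a \<in> set xs \<and> b \<in> set xs"
  by (induction xs) auto

lemma precedes_asym: "distinct xs \<Longrightarrow> precedes xs a b \<Longrightarrow> \<not> precedes xs b a"
  by (induction xs) (auto dest: precedes_in_set)

lemma precedes_irrefl: "distinct xs \<Longrightarrow> \<not> precedes xs a a"
  using precedes_asym by blast

lemma precedes_total: "a \<in> set xs \<Longrightarrow> b \<in> set xs \<Longrightarrow> a \<noteq> b \<Longrightarrow> precedes xs a b \<or> precedes xs b a"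
  by (induction xs) auto

lemma precedes_upt: "precedes [i..<j] a b \<longleftrightarrow> i \<le> a \<and> a < b \<and> b < j"
  by (induction j) (auto simp: precedes_append)

lemma precedes_nth_iff:
  "precedes xs a b \<longleftrightarrow> (\<exists>i j. i < j \<and> j < length xs \<and> xs ! i = a \<and> xs ! j = b)"
proof (induction xs)
  case Nil
  show ?case by simp
next
  case (Cons x xs)
  show ?case
  proof
    assume "precedes (x # xs) a b"
    then consider "x = a" "b \<in> set xs" | "precedes xs a b"
      by auto
    then show "\<exists>i j. i < j \<and> j < length (x # xs) \<and> (x # xs) ! i = a \<and> (x # xs) ! j = b"
    proof cases
      case 1
      then obtain j where "j < length xs" "xs ! j = b"
        by (auto simp: in_set_conv_nth)
      with 1 show ?thesis
        by (intro exI[of _ 0] exI[of _ "Suc j"]) auto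
    next
      case 2
      then obtain i j where "i < j \<and> j < length xs \<and> xs ! i = a \<and> xs ! j = b"
        using Cons.IH by auto
      then show ?thesis
        by (intro exI[of _ "Suc i"] exI[of _ "Suc j"]) auto
    qed
  next
    assume "\<exists>i j. i < j \<and> j < length (x # xs) \<and> (x # xs) ! i = a \<and> (x # xs) ! j = b"
    then obtain i j where ij: "i < j" "j < length (x # xs)" "(x # xs) ! i = a" "(x # xs) ! j = b"
      by blast
    then obtain j' where j': "j = Suc j'"
      by (cases j) auto
    show "precedes (x # xs) a b"
    proof (cases i)
      case 0
      then show ?thesis using ij j' by (auto simp: in_set_conv_nth)
    next
      case (Suc i')
      then have "precedes xs a b" using Cons.IH ij j' by auto
      then show ?thesis by simp
    qed
  qed
qed

lemma precedes_adjacent: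
  assumes "distinct (u @ [l, m] @ v)" "x \<noteq> l" "x \<noteq> m"
  shows "precedes (u @ [l, m] @ v) x l \<longleftrightarrow> x \<in> set u"
    and "precedes (u @ [l, m] @ v) x m \<longleftrightarrow> x \<in> set u"
    and "precedes (u @ [l, m] @ v) l x \<longleftrightarrow> x \<in> set v"
    and "precedes (u @ [l, m] @ v) m x \<longleftrightarrow> x \<in> set v"
  using assms by (auto simp: precedes_append dest: precedes_in_set)

lemma precedes_swap_adjacent:
  assumes "distinct (u @ [a, b] @ v)"
  shows "precedes (u @ [b, a] @ v) x y \<longleftrightarrow>
           (x = b \<and> y = a) \<or> (precedes (u @ [a, b] @ v) x y \<and> \<not> (x = a \<and> y = b))"
  using assms by (auto simp: precedes_append dest: precedes_in_set)

lemma list_eq_iff_precedes: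
  assumes "distinct xs" "distinct ys" "set xs = set ys" "\<And>a b. precedes xs a b \<longleftrightarrow> precedes ys a b"
  shows "xs = ys"
  using assms
proof (induction xs arbitrary: ys)
  case Nil
  then show ?case by simp
next
  case (Cons x xs)
  then obtain y ys' where ys: "ys = y # ys'"
    by (cases ys) auto
  have "x = y"
  proof (rule ccontr)
    assume "x \<noteq> y"
    then have "precedes (x # xs) y x" "precedes (x # xs) x y"
      using Cons.prems ys by auto
    then show False
      using precedes_asym Cons.prems(1) by blast
  qed
  moreover have "xs = ys'"
  proof (rule Cons.IH)
    show "distinct xs" "distinct ys'"
      using Cons.prems ys by auto
    show "set xs = set ys'"
      using Cons.prems ys \<open>x = y\<close> by (metis distinct.simps(2) list.simps(15) insert_ident)
    fix a b
    have "precedes xs a b \<longleftrightarrow> precedes (x # xs) a b \<and> a \<noteq> x"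
      using Cons.prems(1) by (auto dest: precedes_in_set)
    moreover have "precedes ys' a b \<longleftrightarrow> precedes (y # ys') a b \<and> a \<noteq> y"
      using Cons.prems(2) ys by (auto dest: precedes_in_set)
    ultimately show "precedes xs a b \<longleftrightarrow> precedes ys' a b"
      using Cons.prems(4) ys \<open>x = y\<close> by auto
  qed
  ultimately show ?case using ys by simp
qed

lemma adjacent_switch_exists:
  "\<not> f x \<Longrightarrow> y \<in> set xs \<Longrightarrow> f y \<Longrightarrow> \<exists>u a b v. x # xs = u @ [a, b] @ v \<and> \<not> f a \<and> f b"
proof (induction xs arbitrary: x)
  case Nil
  then show ?case by simp
next
  case (Cons z zs)
  show ?case
  proof (cases "f z")
    case True
    then show ?thesis using Cons.prems by (intro exI[of _ "[]"]) auto
  next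
    case False
    moreover have "y \<in> set zs" using Cons.prems False by auto
    ultimately obtain u a b v where "z # zs = u @ [a, b] @ v \<and> \<not> f a \<and> f b"
      using Cons.IH Cons.prems(3) by blast
    then show ?thesis by (intro exI[of _ "x # u"]) auto
  qed
qed

lemma precedes_imp_adjacent_switch:
  assumes "precedes (map g xs) b a" "\<forall>q\<in>set xs. g q = b \<longrightarrow> \<not> f q" "\<forall>q\<in>set xs. g q = a \<longrightarrow> f q"
  shows "\<exists>u x y v. xs = u @ [x, y] @ v \<and> \<not> f x \<and> f y"
proof -
  obtain i j where ij: "i < j" "j < length xs" "g (xs ! i) = b" "g (xs ! j) = a"
    using assms(1) by (auto simp: precedes_nth_iff)
  have "\<not> f (xs ! i)" "f (xs ! j)"
    using assms(2,3) ij by auto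
  moreover have "xs ! j \<in> set (drop (Suc i) xs)"
    using ij by (auto simp: in_set_conv_nth intro!: exI[of _ "j - Suc i"])
  ultimately obtain u x y v where "xs ! i # drop (Suc i) xs = u @ [x, y] @ v" "\<not> f x" "f y"
    using adjacent_switch_exists by metis
  moreover have "xs = take i xs @ xs ! i # drop (Suc i) xs"
    using ij by (simp add: id_take_nth_drop)
  ultimately show ?thesis
    by (intro exI[of _ "take i xs @ u"]) (metis append.assoc)
qed

definition inverted :: "nat list \<Rightarrow> nat \<Rightarrow> nat \<Rightarrow> bool" where
  "inverted ls a b \<longleftrightarrow> (a < b \<and> precedes ls b a) \<or> (b < a \<and> precedes ls a b)"

lemma inverted_sym: "inverted ls a b \<longleftrightarrow> inverted ls b a"
  unfolding inverted_def by auto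

lemma inverted_swap_adjacent:
  assumes "distinct (u @ [l, m] @ v)" "l < m"
  shows "inverted (u @ [m, l] @ v) x y \<longleftrightarrow>
           inverted (u @ [l, m] @ v) x y \<or> (x = l \<and> y = m) \<or> (x = m \<and> y = l)"
proof -
  have "precedes (u @ [l, m] @ v) l m"
    by (simp add: precedes_append)
  moreover have "\<not> precedes (u @ [l, m] @ v) m l"
    using precedes_asym[OF assms(1) calculation] .
  ultimately show ?thesis
    unfolding inverted_def precedes_swap_adjacent[OF assms(1)] using assms(2) by auto
qed

lemma not_inverted_adjacent:
  assumes "distinct (u @ [l, m] @ v)" "l < m"
  shows "\<not> inverted (u @ [l, m] @ v) l m"
  using precedes_asym[OF assms(1), of l m] assms(2) unfolding inverted_def by (auto simp: precedes_append)

lemma sum_of_bool_bounds: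
  "0 \<le> (\<Sum>r<R. of_bool (Q r) :: int) \<and> (\<Sum>r<R. of_bool (Q r) :: int) \<le> int R"
proof -
  have "(\<Sum>r<R. of_bool (Q r) :: int) \<le> (\<Sum>r<R. 1)"
    by (intro sum_mono) auto
  then show ?thesis by (auto intro: sum_nonneg)
qed

lemma sum_of_bool_diff_bounds:
  "- int R \<le> (\<Sum>r<R. of_bool (Q r) - of_bool (Q' r) :: int) \<and>
   (\<Sum>r<R. of_bool (Q r) - of_bool (Q' r) :: int) \<le> int R"
proof -
  have "(\<Sum>r<R. of_bool (Q r) - of_bool (Q' r) :: int) \<le> (\<Sum>r<R. 1)"
    by (intro sum_mono) auto
  moreover have "(\<Sum>r<R. -1) \<le> (\<Sum>r<R. of_bool (Q r) - of_bool (Q' r) :: int)"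
    by (intro sum_mono) auto
  ultimately show ?thesis by auto
qed

lemma sum_of_bool_add_index:
  assumes "\<And>r. r < R \<Longrightarrow> Q r \<longleftrightarrow> P r \<or> r = j" "j < R \<Longrightarrow> \<not> P j"
  shows "(\<Sum>r<(R::nat). of_bool (Q r) :: int) = (\<Sum>r<R. of_bool (P r)) + of_bool (j < R)"
proof (cases "j < R")
  case True
  have "(\<Sum>r<R. of_bool (Q r) :: int) = of_bool (Q j) + (\<Sum>r\<in>{..<R} - {j}. of_bool (Q r))"
    using True by (subst sum.remove[of "{..<R}" j]) auto
  also have "\<dots> = 1 + (\<Sum>r\<in>{..<R} - {j}. of_bool (P r))"
    using True assms(1) by (auto intro!: sum.cong)
  also have "\<dots> = (\<Sum>r<R. of_bool (P r)) + 1"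
    using True assms(2) sum.remove[of "{..<R}" j "\<lambda>r. of_bool (P r) :: int"] by simp
  finally show ?thesis using True by simp
next
  case False
  then show ?thesis using assms(1) by (auto intro!: sum.cong)
qed

section \<open>The rewriting relations terminate and preserve the group element\<close>

lemma exists_normal_form_measure:
  assumes "\<And>x y. R x y \<Longrightarrow> (m :: 'a \<Rightarrow> nat) y < m x"
  shows "\<exists>y. R\<^sup>*\<^sup>* x y \<and> \<not> (\<exists>z. R y z)"
proof (induction "m x" arbitrary: x rule: less_induct)
  case less
  show ?case
  proof (cases "\<exists>z. R x z")
    case True
    then obtain z where "R x z" by blast
    with less[of z] assms obtain y where "R\<^sup>*\<^sup>* z y \<and> \<not> (\<exists>z. R y z)" by blast
    then show ?thesis using \<open>R x z\<close> by (meson converse_rtranclp_into_rtranclp)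
  qed auto
qed

fun inverse_pairs :: "lword \<Rightarrow> nat" where
  "inverse_pairs [] = 0"
| "inverse_pairs (q # qs) = (if snd (fst q) then 0 else length qs) + inverse_pairs qs"

lemma inverse_pairs_append:
  "inverse_pairs (xs @ ys) =
     inverse_pairs xs + inverse_pairs ys + length (filter (\<lambda>q. \<not> snd (fst q)) xs) * length ys"
  by (induction xs) auto

lemma sq_step_decreases_inverse_pairs: "sq_step p s s' \<Longrightarrow> inverse_pairs s' < inverse_pairs s"
  by (induction rule: sq_step.induct) (auto simp: inverse_pairs_append)

lemma tl_step_decreases_index_sum:
  "tl_step p s s' \<Longrightarrow> p \<ge> 2 \<Longrightarrow> sum_list (map (fst \<circ> fst) s') < sum_list (map (fst \<circ> fst) s)"
  by (induction rule: tl_step.induct) auto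

declare Fp_eq.trans [trans]

lemma Fp_eq_context: "Fp_eq p u v \<Longrightarrow> Fp_eq p (x @ u @ y) (x @ v @ y)"
proof (induction rule: Fp_eq.induct)
  case (refl w)
  show ?case by (rule Fp_eq.refl)
next
  case (sym u v)
  then show ?case by (blast intro: Fp_eq.sym)
next
  case (trans u v w)
  then show ?case by (blast intro: Fp_eq.trans)
next
  case (cancel u a s v)
  from Fp_eq.cancel[of p "x @ u" a s "v @ y"] show ?case by simp
next
  case (rel k m u v)
  from Fp_eq.rel[OF rel, of p "x @ u" "v @ y"] show ?case by simp
qed

lemma Fp_eq_insert_pair: "Fp_eq p (u @ v) (u @ [(a, s), (a, \<not> s)] @ v)"
  by (rule Fp_eq.sym, rule Fp_eq.cancel)

lemma Fp_eq_inverse_gt: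
  assumes "b < a"
  shows "Fp_eq p [(a, False), (b, True)] [(b, True), (a + p - 1, False)]"
proof -
  have "Fp_eq p [(a, False), (b, True)] [(a, False), (b, True), (a + p - 1, True), (a + p - 1, False)]"
    using Fp_eq_insert_pair[of p "[(a, False), (b, True)]" "[]" "a + p - 1" True] by simp
  also have "Fp_eq p \<dots> [(a, False), (a, True), (b, True), (a + p - 1, False)]"
    using Fp_eq.rel[OF assms, of p "[(a, False)]" "[(a + p - 1, False)]"] by (simp add: Fp_eq.sym)
  also have "Fp_eq p \<dots> [(b, True), (a + p - 1, False)]"
    using Fp_eq.cancel[of p "[]" a False "[(b, True), (a + p - 1, False)]"] by simp
  finally show ?thesis .
qed

lemma Fp_eq_inverse_lt:
  assumes "a < b"
  shows "Fp_eq p [(a, False), (b, True)] [(b + p - 1, True), (a, False)]"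
proof -
  have "Fp_eq p [(a, False), (b, True)] [(a, False), (b, True), (a, True), (a, False)]"
    using Fp_eq_insert_pair[of p "[(a, False), (b, True)]" "[]" a True] by simp
  also have "Fp_eq p \<dots> [(a, False), (a, True), (b + p - 1, True), (a, False)]"
    using Fp_eq.rel[OF assms, of p "[(a, False)]" "[(a, False)]"] by simp
  also have "Fp_eq p \<dots> [(b + p - 1, True), (a, False)]"
    using Fp_eq.cancel[of p "[]" a False "[(b + p - 1, True), (a, False)]"] by simp
  finally show ?thesis .
qed

lemma Fp_eq_inverse_eq: "Fp_eq p [(a, False), (a, True)] [(a, True), (a, False)]"
proof -
  have "Fp_eq p [(a, False), (a, True)] []"
    using Fp_eq.cancel[of p "[]" a False "[]"] by simp
  also have "Fp_eq p [] [(a, True), (a, False)]"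
    using Fp_eq_insert_pair[of p "[]" "[]" a True] by simp
  finally show ?thesis .
qed

lemma Fp_eq_positive_swap:
  assumes "p \<ge> 2" "a + p - 1 < b"
  shows "Fp_eq p [(a, True), (b, True)] [(b + 1 - p, True), (a, True)]"
proof -
  have "a < b + 1 - p" "b + 1 - p + p - 1 = b"
    using assms by auto
  from Fp_eq.rel[OF this(1), of p "[]" "[]"] this(2) show ?thesis
    by (simp add: Fp_eq.sym)
qed

lemma Fp_eq_inverse_swap:
  assumes "p \<ge> 2" "b + p - 1 < a"
  shows "Fp_eq p [(a, False), (b, False)] [(b, False), (a + 1 - p, False)]"
proof -
  define m where "m = a + 1 - p"
  have bm: "b < m" and mp: "m + p - 1 = a"
    using assms by (auto simp: m_def)
  have "Fp_eq p [(a, False), (b, False)] [(b, False), (b, True), (a, False), (b, False)]"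
    using Fp_eq_insert_pair[of p "[]" "[(a, False), (b, False)]" b False] by simp
  also have "Fp_eq p \<dots> [(b, False), (m, False), (m, True), (b, True), (a, False), (b, False)]"
    using Fp_eq_insert_pair[of p "[(b, False)]" "[(b, True), (a, False), (b, False)]" m False] by simp
  also have "Fp_eq p \<dots> [(b, False), (m, False), (b, True), (a, True), (a, False), (b, False)]"
    using Fp_eq.rel[OF bm, of p "[(b, False), (m, False)]" "[(a, False), (b, False)]"] mp by simp
  also have "Fp_eq p \<dots> [(b, False), (m, False), (b, True), (b, False)]"
    using Fp_eq.cancel[of p "[(b, False), (m, False), (b, True)]" a True "[(b, False)]"] by simp
  also have "Fp_eq p \<dots> [(b, False), (m, False)]"
    using Fp_eq.cancel[of p "[(b, False), (m, False)]" b True "[]"] by simp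
  finally show ?thesis unfolding m_def .
qed

lemma sq_step_Fp_eq: "sq_step p s s' \<Longrightarrow> Fp_eq p (map fst s) (map fst s')"
proof (induction rule: sq_step.induct)
  case (gt b a u l m v)
  then show ?case using Fp_eq_context[OF Fp_eq_inverse_gt[OF gt]] by simp
next
  case (lt a b u l m v)
  then show ?case using Fp_eq_context[OF Fp_eq_inverse_lt[OF lt]] by simp
next
  case (eq a b u l m v)
  then show ?case using Fp_eq_context[OF Fp_eq_inverse_eq[of p a]] by simp
qed

lemma tl_step_Fp_eq: "tl_step p s s' \<Longrightarrow> p \<ge> 2 \<Longrightarrow> Fp_eq p (map fst s) (map fst s')"
proof (induction rule: tl_step.induct)
  case (pos a b u l m v)
  then show ?case using Fp_eq_context[OF Fp_eq_positive_swap[OF pos.prems pos.hyps]] by simp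
next
  case (neg b a u l m v)
  then show ?case using Fp_eq_context[OF Fp_eq_inverse_swap[OF neg.prems neg.hyps]] by simp
qed

lemma rtranclp_Fp_eq:
  assumes "R\<^sup>*\<^sup>* s s'" "\<And>s s'. R s s' \<Longrightarrow> Fp_eq p (map fst s) (map fst s')"
  shows "Fp_eq p (map fst s) (map fst s')"
  using assms(1)
proof (induction rule: rtranclp_induct)
  case base
  show ?case by (rule Fp_eq.refl)
next
  case (step y z)
  then show ?case using assms(2) by (blast intro: Fp_eq.trans)
qed

lemma exists_NF_rel: "p \<ge> 2 \<Longrightarrow> \<exists>u. NF_rel p w u"
proof -
  assume "p \<ge> 2"
  obtain v where "(sq_step p)\<^sup>*\<^sup>* w v" "\<not> (\<exists>v'. sq_step p v v')"
    using exists_normal_form_measure[of "sq_step p" inverse_pairs] sq_step_decreases_inverse_pairs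
    by blast
  moreover obtain u where "(tl_step p)\<^sup>*\<^sup>* v u" "\<not> (\<exists>u'. tl_step p u u')"
    using exists_normal_form_measure[of "tl_step p" "\<lambda>s. sum_list (map (fst \<circ> fst) s)"]
      tl_step_decreases_index_sum \<open>p \<ge> 2\<close> by blast
  ultimately show ?thesis unfolding NF_rel_def by blast
qed

lemma NF_rel_Fp_eq:
  assumes "NF_rel p w u" "p \<ge> 2"
  shows "Fp_eq p (map fst w) (map fst u)"
proof -
  obtain v where "(sq_step p)\<^sup>*\<^sup>* w v" "(tl_step p)\<^sup>*\<^sup>* v u"
    using assms(1) unfolding NF_rel_def by blast
  then have "Fp_eq p (map fst w) (map fst v)" "Fp_eq p (map fst v) (map fst u)"
    using rtranclp_Fp_eq sq_step_Fp_eq tl_step_Fp_eq assms(2) by blast+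
  then show ?thesis by (rule Fp_eq.trans)
qed

lemma Fp_eq_nested_cancel: "Fp_eq p (map (\<lambda>i. (i, True)) (rev js) @ map (\<lambda>i. (i, False)) js) []"
proof (induction js)
  case Nil
  show ?case by (simp add: Fp_eq.refl)
next
  case (Cons i js)
  have "Fp_eq p (map (\<lambda>i. (i, True)) (rev js) @ [(i, True), (i, \<not> True)] @ map (\<lambda>i. (i, False)) js)
     (map (\<lambda>i. (i, True)) (rev js) @ map (\<lambda>i. (i, False)) js)"
    by (rule Fp_eq.cancel)
  with Cons show ?case by (simp, meson Fp_eq.trans)
qed

section \<open>The witness word attached to an increasing sequence\<close>

text \<open>
  Position \<open>l\<close> of the witness carries a positive letter iff \<open>t l \<le> k\<close>; in the
  prescribed normal form it then stands \<open>level l = k - t l\<close> places left of the centre, while an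
  inverse letter stands \<open>level l = t l - (k + 1)\<close> places right of it. \<open>pos_at r\<close> and \<open>neg_at r\<close>
  are the two positions of level \<open>r\<close>.
\<close>

locale witness_construction =
  fixes p d :: nat and t :: "nat \<Rightarrow> nat" and c :: "nat \<Rightarrow> nat"
  assumes p_ge_2: "p \<ge> 2" and even_d: "even d" and t_permutes: "t permutes {1..d}"
    and c_increasing: "\<And>r r'. r' < r \<Longrightarrow> r < d div 2 \<Longrightarrow> c r' < c r"
begin

definition "k = d div 2"
definition "shift = int p - 1"
definition "tinv = inv t"
definition "positive l \<longleftrightarrow> t l \<le> k"
definition "level l = (if t l \<le> k then k - t l else t l - Suc k)"
definition "pos_at r = tinv (k - r)"
definition "neg_at r = tinv (Suc (k + r))"
definition "anchor r = 3 * (shift * int k) + int (c r) + int r * (6 * (shift * int k))"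

lemma d_eq: "d = 2 * k"
  using even_d unfolding k_def by auto

lemma shift_ge_1: "shift \<ge> 1"
  using p_ge_2 unfolding shift_def by auto

lemma t_in_range: "l \<in> {1..d} \<Longrightarrow> t l \<in> {1..d}"
  using permutes_in_image[OF t_permutes] by auto

lemma tinv_in_range: "l \<in> {1..d} \<Longrightarrow> tinv l \<in> {1..d}"
  using permutes_in_image[OF permutes_inv[OF t_permutes]] unfolding tinv_def by auto

lemma t_tinv [simp]: "t (tinv x) = x"
  unfolding tinv_def using permutes_inverses[OF t_permutes] by auto

lemma tinv_t [simp]: "tinv (t x) = x"
  unfolding tinv_def using permutes_inverses[OF t_permutes] by auto

lemma pos_at:
  assumes "r < k"
  shows "pos_at r \<in> {1..d}" "positive (pos_at r)" "level (pos_at r) = r" "t (pos_at r) = k - r"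
proof -
  have "k - r \<in> {1..d}" using assms d_eq by auto
  from tinv_in_range[OF this] assms
  show "pos_at r \<in> {1..d}" "positive (pos_at r)" "level (pos_at r) = r" "t (pos_at r) = k - r"
    unfolding pos_at_def positive_def level_def by auto
qed

lemma neg_at:
  assumes "r < k"
  shows "neg_at r \<in> {1..d}" "\<not> positive (neg_at r)" "level (neg_at r) = r" "t (neg_at r) = Suc (k + r)"
proof -
  have "Suc (k + r) \<in> {1..d}" using assms d_eq by auto
  from tinv_in_range[OF this] assms
  show "neg_at r \<in> {1..d}" "\<not> positive (neg_at r)" "level (neg_at r) = r" "t (neg_at r) = Suc (k + r)"
    unfolding neg_at_def positive_def level_def by auto
qed

lemma level_less: "l \<in> {1..d} \<Longrightarrow> level l < k"
  using t_in_range[of l] d_eq unfolding level_def by auto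

lemma pos_at_level: "l \<in> {1..d} \<Longrightarrow> positive l \<Longrightarrow> pos_at (level l) = l"
proof -
  assume "l \<in> {1..d}" "positive l"
  then have "k - (k - t l) = t l" using t_in_range[of l] unfolding positive_def by auto
  with \<open>positive l\<close> show ?thesis unfolding level_def positive_def pos_at_def by simp
qed

lemma neg_at_level: "l \<in> {1..d} \<Longrightarrow> \<not> positive l \<Longrightarrow> neg_at (level l) = l"
proof -
  assume "l \<in> {1..d}" "\<not> positive l"
  then have "Suc (k + (t l - Suc k)) = t l" using t_in_range[of l] unfolding positive_def by auto
  with \<open>\<not> positive l\<close> show ?thesis unfolding level_def positive_def neg_at_def by simp
qed

lemma pos_at_eq_iff: "r < k \<Longrightarrow> m \<in> {1..d} \<Longrightarrow> positive m \<Longrightarrow> pos_at r = m \<longleftrightarrow> r = level m"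
  using pos_at pos_at_level by auto

lemma neg_at_eq_iff: "r < k \<Longrightarrow> m \<in> {1..d} \<Longrightarrow> \<not> positive m \<Longrightarrow> neg_at r = m \<longleftrightarrow> r = level m"
  using neg_at neg_at_level by auto

lemma eq_if_same_sign_same_level:
  "l \<in> {1..d} \<Longrightarrow> m \<in> {1..d} \<Longrightarrow> positive l = positive m \<Longrightarrow> level l = level m \<Longrightarrow> l = m"
  by (metis neg_at_level pos_at_level)

definition "in_window l x \<longleftrightarrow>
  anchor (level l) - 3 * (shift * int (level l)) \<le> x \<and> x \<le> anchor (level l) + 3 * (shift * int (level l))"

lemma anchor_gap: "r' < r \<Longrightarrow> r < k \<Longrightarrow> anchor r' + 6 * (shift * int k) + 1 \<le> anchor r"
proof -
  assume rr': "r' < r" "r < k"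
  then have "c r' < c r" using c_increasing unfolding k_def by auto
  have "1 * (6 * (shift * int k)) \<le> (int r - int r') * (6 * (shift * int k))"
    using rr' shift_ge_1 by (intro mult_right_mono) auto
  with \<open>c r' < c r\<close> show ?thesis unfolding anchor_def by (auto simp: algebra_simps)
qed

lemma window_separation:
  assumes "l \<in> {1..d}" "l' \<in> {1..d}" "level l' < level l" "in_window l x" "in_window l' y"
  shows "y + shift < x"
proof -
  have "level l < k" using level_less assms by auto
  then have "anchor (level l') + 6 * (shift * int k) + 1 \<le> anchor (level l)"
    using anchor_gap assms by auto
  moreover have "shift * int (level l) \<le> shift * (int k - 1)" "shift * int (level l') \<le> shift * (int k - 2)"
    using \<open>level l < k\<close> assms(3) shift_ge_1 by (auto intro: mult_left_mono)
  ultimately show ?thesis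
    using assms(4,5) shift_ge_1 unfolding in_window_def by (auto simp: algebra_simps)
qed

text \<open>
  In a \<open>\<leadsto>\<close>-step the letter of higher level gains \<open>p - 1\<close>; so the index of a letter exceeds
  its initial value by \<open>p - 1\<close> times the number of opposite-sign letters of lower level it has
  crossed (\<open>gain\<close>). The corrections in the initial values of inverse letters are chosen so
  that the two letters of equal level meet with equal indices.
\<close>

definition "final_corr r =
  (\<Sum>r'<r. of_bool (neg_at r' < pos_at r) - of_bool (pos_at r' < pos_at r) :: int)"
definition "neg_corr r =
  (\<Sum>r'<r. of_bool (neg_at r < pos_at r') - of_bool (neg_at r < neg_at r') :: int)"
definition "init_value l = (if positive l then anchor (level l)
  else anchor (level l) + shift * (final_corr (level l) - neg_corr (level l)))"
definition "witness = map (\<lambda>l. (nat (init_value l), positive l)) [1..<Suc d]"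

definition "opposite_at l r = (if positive l then neg_at r else pos_at r)"
definition "gain s l = (\<Sum>r<level l. of_bool (inverted (map snd s) l (opposite_at l r)) :: int)"

lemma init_value_bounds:
  assumes "l \<in> {1..d}"
  shows "anchor (level l) - 2 * (shift * int (level l)) \<le> init_value l"
    and "init_value l \<le> anchor (level l) + 2 * (shift * int (level l))"
proof -
  have "- int (level l) \<le> final_corr (level l) \<and> final_corr (level l) \<le> int (level l)"
    unfolding final_corr_def by (rule sum_of_bool_diff_bounds)
  moreover have "- int (level l) \<le> neg_corr (level l) \<and> neg_corr (level l) \<le> int (level l)"
    unfolding neg_corr_def by (rule sum_of_bool_diff_bounds)
  ultimately have "- (2 * int (level l)) \<le> final_corr (level l) - neg_corr (level l)"
       "final_corr (level l) - neg_corr (level l) \<le> 2 * int (level l)"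
    by linarith+
  then have "shift * (- (2 * int (level l))) \<le> shift * (final_corr (level l) - neg_corr (level l))"
            "shift * (final_corr (level l) - neg_corr (level l)) \<le> shift * (2 * int (level l))"
    using shift_ge_1 by (auto intro!: mult_left_mono simp del: mult_minus_right)
  then show "anchor (level l) - 2 * (shift * int (level l)) \<le> init_value l"
    and "init_value l \<le> anchor (level l) + 2 * (shift * int (level l))"
    unfolding init_value_def using shift_ge_1 by (auto simp: algebra_simps)
qed

lemma init_value_nonneg: "l \<in> {1..d} \<Longrightarrow> 0 \<le> init_value l"
proof -
  assume l: "l \<in> {1..d}"
  then have "shift * int (level l) \<le> shift * int k"
    using level_less shift_ge_1 by (intro mult_left_mono) (auto simp: less_imp_le)
  moreover have "0 \<le> shift * int k" "0 \<le> int (level l) * (6 * (shift * int k))"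
    using shift_ge_1 by auto
  ultimately show ?thesis
    using init_value_bounds(1)[OF l] of_nat_0_le_iff[of "c (level l)"] unfolding anchor_def by linarith
qed

lemma in_window_init_value:
  assumes "l \<in> {1..d}" "0 \<le> g" "g \<le> int (level l)" "0 \<le> h" "h \<le> int (level l)"
  shows "in_window l (init_value l + shift * g - shift * h)"
proof -
  have "shift * g \<le> shift * int (level l)" "shift * h \<le> shift * int (level l)"
       "0 \<le> shift * g" "0 \<le> shift * h"
    using assms shift_ge_1 by (auto intro: mult_left_mono)
  then show ?thesis using init_value_bounds[OF assms(1)] unfolding in_window_def by auto
qed

lemma gain_bounds: "0 \<le> gain s l \<and> gain s l \<le> int (level l)"
  unfolding gain_def by (rule sum_of_bool_bounds)

subsection \<open>The first phase\<close>

definition "labels_perm s \<longleftrightarrow> distinct (map snd s) \<and> set (map snd s) = {1..d}"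

definition "sq_sorted ls \<longleftrightarrow>
  (\<forall>a\<in>{1..d}. \<forall>b\<in>{1..d}. a < b \<longrightarrow> positive a \<or> \<not> positive b \<longrightarrow> precedes ls a b)"

definition sq_inv :: "lword \<Rightarrow> bool" where
  "sq_inv s \<longleftrightarrow> labels_perm s \<and> sq_sorted (map snd s) \<and>
    (\<forall>q\<in>set s. snd (fst q) = positive (snd q) \<and>
       int (fst (fst q)) = init_value (snd q) + shift * gain s (snd q))"

lemma sq_inv_adjacent:
  assumes "sq_inv s" "s = u @ [((a, False), l), ((b, True), m)] @ v"
  shows "l \<in> {1..d}" "m \<in> {1..d}" "\<not> positive l" "positive m" "l < m"
    "int a = init_value l + shift * gain s l" "int b = init_value m + shift * gain s m"
    "distinct (map snd u @ [l, m] @ map snd v)"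
proof -
  show ds: "distinct (map snd u @ [l, m] @ map snd v)"
    and lm: "l \<in> {1..d}" "m \<in> {1..d}"
    using assms unfolding sq_inv_def labels_perm_def by (auto simp: image_iff)
  show sg: "\<not> positive l" "positive m"
    and "int a = init_value l + shift * gain s l" "int b = init_value m + shift * gain s m"
    using assms unfolding sq_inv_def by auto
  have "precedes (map snd s) l m"
    using assms(2) by (simp add: precedes_append)
  moreover have "\<not> precedes (map snd s) m l" if "m < l"
    using precedes_asym[of "map snd s"] ds calculation assms(2) by auto
  ultimately have "\<not> m < l"
    using assms(1) lm sg unfolding sq_inv_def sq_sorted_def by blast
  moreover have "l \<noteq> m" using ds by auto
  ultimately show "l < m" by auto
qed

lemma sq_inverted_adjacent:
  assumes "sq_sorted ls" "ls = u @ [l, m] @ v" "distinct ls" "l \<in> {1..d}" "m \<in> {1..d}"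
    "\<not> positive l" "positive m" "l < m" "x \<in> {1..d}" "x \<noteq> l" "x \<noteq> m"
  shows "positive x \<Longrightarrow> inverted ls l x \<longleftrightarrow> l < x \<and> x < m"
    and "\<not> positive x \<Longrightarrow> inverted ls m x \<longleftrightarrow> l < x \<and> x < m"
proof -
  have ord: "precedes ls a b" if "a \<in> {1..d}" "b \<in> {1..d}" "a < b" "positive a \<or> \<not> positive b" for a b
    using assms(1) that unfolding sq_sorted_def by blast
  note adj = precedes_adjacent[of u l m v x, folded assms(2), OF assms(3) assms(10,11)]
  note asym = precedes_asym[OF assms(3)]
  have "x < l \<or> l < x \<and> x < m \<or> m < x"
    using assms(8,10,11) by linarith
  then show "inverted ls l x \<longleftrightarrow> l < x \<and> x < m" if "positive x"
  proof (elim disjE conjE)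
    assume "x < l"
    then have "precedes ls x l" using ord assms(4,9) that by blast
    then show ?thesis using \<open>x < l\<close> asym unfolding inverted_def by auto
  next
    assume "l < x" "x < m"
    then have "precedes ls x m" using ord assms(5,9) that by blast
    then show ?thesis using \<open>l < x\<close> \<open>x < m\<close> adj(1,2) unfolding inverted_def by auto
  next
    assume "m < x"
    then have "precedes ls m x" using ord assms(5,7,9) by blast
    then have "precedes ls l x" using adj(3,4) by auto
    then show ?thesis using \<open>m < x\<close> assms(8) asym unfolding inverted_def by auto
  qed
  show "inverted ls m x \<longleftrightarrow> l < x \<and> x < m" if "\<not> positive x"
    using \<open>x < l \<or> l < x \<and> x < m \<or> m < x\<close>
  proof (elim disjE conjE)
    assume "x < l"
    then have "precedes ls x l" using ord assms(4,6,9) by blast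
    then have "precedes ls x m" using adj(1,2) by auto
    then show ?thesis using \<open>x < l\<close> assms(8) asym unfolding inverted_def by auto
  next
    assume "l < x" "x < m"
    then have "precedes ls l x" using ord assms(4,9) that by blast
    then show ?thesis using \<open>l < x\<close> \<open>x < m\<close> adj(3,4) unfolding inverted_def by auto
  next
    assume "m < x"
    then have "precedes ls m x" using ord assms(5,9) that by blast
    then show ?thesis using \<open>m < x\<close> asym unfolding inverted_def by auto
  qed
qed

lemma gain_adjacent_same_level:
  assumes "sq_inv s" "s = u @ [((a, False), l), ((b, True), m)] @ v" "level l = level m"
  shows "gain s l = (\<Sum>r<level l. of_bool (l < pos_at r \<and> pos_at r < m))"
    and "gain s m = (\<Sum>r<level l. of_bool (l < neg_at r \<and> neg_at r < m))"
proof -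
  note adj = sq_inv_adjacent[OF assms(1,2)]
  have ls: "sq_sorted (map snd s)" "map snd s = map snd u @ [l, m] @ map snd v" "distinct (map snd s)"
    using assms(1,2) adj unfolding sq_inv_def by auto
  have "level l < k" using level_less adj by auto
  show "gain s l = (\<Sum>r<level l. of_bool (l < pos_at r \<and> pos_at r < m))"
    unfolding gain_def
  proof (intro sum.cong HOL.refl)
    fix r assume "r \<in> {..<level l}"
    then have "r < k" "r < level l" using \<open>level l < k\<close> by auto
    then have "pos_at r \<noteq> l" "pos_at r \<noteq> m"
      using pos_at[of r] adj(3) assms(3) by auto
    then show "of_bool (inverted (map snd s) l (opposite_at l r)) = (of_bool (l < pos_at r \<and> pos_at r < m) :: int)"
      using sq_inverted_adjacent(1)[OF ls adj(1-5) pos_at(1)[OF \<open>r < k\<close>]] pos_at(2)[OF \<open>r < k\<close>] adj(3)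
      unfolding opposite_at_def by auto
  qed
  show "gain s m = (\<Sum>r<level l. of_bool (l < neg_at r \<and> neg_at r < m))"
    unfolding gain_def assms(3)
  proof (intro sum.cong HOL.refl)
    fix r assume "r \<in> {..<level m}"
    then have "r < k" "r < level m" using \<open>level l < k\<close> assms(3) by auto
    then have "neg_at r \<noteq> l" "neg_at r \<noteq> m"
      using neg_at[of r] adj(4) assms(3) by auto
    then show "of_bool (inverted (map snd s) m (opposite_at m r)) = (of_bool (l < neg_at r \<and> neg_at r < m) :: int)"
      using sq_inverted_adjacent(2)[OF ls adj(1-5) neg_at(1)[OF \<open>r < k\<close>]] neg_at(2)[OF \<open>r < k\<close>] adj(4)
      unfolding opposite_at_def by auto
  qed
qed

text \<open>For \<open>l < m\<close> and every \<open>x\<close>, \<open>[x < m] + [l < x] - [l < x < m] = 1\<close>; summed over the lower levels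
  this is exactly the difference of the corrections of the two letters of level \<open>r\<close>.\<close>

lemma sq_equal_levels_equal_indices:
  assumes "sq_inv s" "s = u @ [((a, False), l), ((b, True), m)] @ v" "level l = level m"
  shows "a = b"
proof -
  note adj = sq_inv_adjacent[OF assms(1,2)]
  define r where "r = level l"
  have l: "l = neg_at r" and m: "m = pos_at r"
    using neg_at_level[OF adj(1,3)] pos_at_level[OF adj(2,4)] r_def assms(3) by auto
  have "final_corr r = (\<Sum>r'<r. of_bool (neg_at r' < m) - of_bool (pos_at r' < m))"
    "neg_corr r = (\<Sum>r'<r. of_bool (l < pos_at r') - of_bool (l < neg_at r'))"
    unfolding final_corr_def neg_corr_def l m by simp_all
  then have "final_corr r - neg_corr r + gain s l - gain s m =
    (\<Sum>r'<r. (of_bool (neg_at r' < m) - of_bool (pos_at r' < m))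
             - (of_bool (l < pos_at r') - of_bool (l < neg_at r'))
             + of_bool (l < pos_at r' \<and> pos_at r' < m) - of_bool (l < neg_at r' \<and> neg_at r' < m) :: int)"
    unfolding gain_adjacent_same_level[OF assms] r_def[symmetric] by (simp only: sum_subtractf sum.distrib)
  also have "\<dots> = 0"
    using adj(5) by (intro sum.neutral) (auto simp: of_bool_def)
  finally have "shift * (final_corr r - neg_corr r + gain s l - gain s m) = 0" by simp
  then have "int a = int b"
    using adj(3,4,6,7) assms(3) r_def unfolding init_value_def by (simp add: algebra_simps)
  then show ?thesis by simp
qed

lemma sq_indices_order_levels:
  assumes "sq_inv s" "s = u @ [((a, False), l), ((b, True), m)] @ v"
  shows "b < a \<Longrightarrow> level m < level l" "a < b \<Longrightarrow> level l < level m" "a = b \<Longrightarrow> level l = level m"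
proof -
  note adj = sq_inv_adjacent[OF assms]
  have "in_window l (int a)" "in_window m (int b)"
    using adj in_window_init_value[of l "gain s l" 0] in_window_init_value[of m "gain s m" 0]
      gain_bounds[of s l] gain_bounds[of s m] by auto
  then have "level l < level m \<Longrightarrow> int a + shift < int b" "level m < level l \<Longrightarrow> int b + shift < int a"
    using window_separation adj(1,2) by blast+
  moreover have "level l = level m \<Longrightarrow> a = b"
    using sq_equal_levels_equal_indices[OF assms] .
  ultimately show "b < a \<Longrightarrow> level m < level l" "a < b \<Longrightarrow> level l < level m"
    "a = b \<Longrightarrow> level l = level m"
    using shift_ge_1 by (cases "level l" "level m" rule: linorder_cases; force)+
qed

lemma gain_sq_swap:
  assumes "sq_inv s" "s = u @ [((a, False), l), ((b, True), m)] @ v"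
    "s' = u @ [((b', True), m), ((a', False), l)] @ v"
  shows "gain s' l = gain s l + of_bool (level m < level l)"
    and "gain s' m = gain s m + of_bool (level l < level m)"
    and "z \<noteq> l \<Longrightarrow> z \<noteq> m \<Longrightarrow> gain s' z = gain s z"
proof -
  note adj = sq_inv_adjacent[OF assms(1,2)]
  have ls: "map snd s = map snd u @ [l, m] @ map snd v" "map snd s' = map snd u @ [m, l] @ map snd v"
    using assms(2,3) by auto
  have swap: "inverted (map snd s') x y \<longleftrightarrow> inverted (map snd s) x y \<or> (x = l \<and> y = m) \<or> (x = m \<and> y = l)"
    for x y
    unfolding ls using inverted_swap_adjacent[OF adj(8,5)] by auto
  have not_inv: "\<not> inverted (map snd s) l m" "\<not> inverted (map snd s) m l"
    unfolding ls using not_inverted_adjacent[OF adj(8,5)] inverted_sym by blast+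
  have "level l < k" "level m < k" using adj level_less by auto
  show "gain s' l = gain s l + of_bool (level m < level l)"
    unfolding gain_def
  proof (rule sum_of_bool_add_index)
    fix r assume "r < level l"
    then show "inverted (map snd s') l (opposite_at l r) \<longleftrightarrow> inverted (map snd s) l (opposite_at l r) \<or> r = level m"
      using swap pos_at[of r] pos_at_eq_iff[of r m] \<open>level l < k\<close> adj(1-4) unfolding opposite_at_def by auto
  next
    show "\<not> inverted (map snd s) l (opposite_at l (level m))"
      using not_inv pos_at_level adj(2-4) unfolding opposite_at_def by auto
  qed
  show "gain s' m = gain s m + of_bool (level l < level m)"
    unfolding gain_def
  proof (rule sum_of_bool_add_index)
    fix r assume "r < level m"
    then show "inverted (map snd s') m (opposite_at m r) \<longleftrightarrow> inverted (map snd s) m (opposite_at m r) \<or> r = level l"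
      using swap neg_at[of r] neg_at_eq_iff[of r l] \<open>level m < k\<close> adj(1-4) unfolding opposite_at_def by auto
  next
    show "\<not> inverted (map snd s) m (opposite_at m (level l))"
      using not_inv neg_at_level adj(1,3,4) unfolding opposite_at_def by auto
  qed
  show "z \<noteq> l \<Longrightarrow> z \<noteq> m \<Longrightarrow> gain s' z = gain s z"
    unfolding gain_def using swap by auto
qed

lemma sq_inv_swap:
  assumes "sq_inv s" "s = u @ [((a, False), l), ((b, True), m)] @ v"
    "s' = u @ [((b', True), m), ((a', False), l)] @ v"
    "int a' = init_value l + shift * (gain s l + of_bool (level m < level l))"
    "int b' = init_value m + shift * (gain s m + of_bool (level l < level m))"
  shows "sq_inv s'"
proof -
  note adj = sq_inv_adjacent[OF assms(1,2)]
  note gain = gain_sq_swap[OF assms(1-3)]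
  have ls: "map snd s = map snd u @ [l, m] @ map snd v" "map snd s' = map snd u @ [m, l] @ map snd v"
    using assms(2,3) by auto
  have "labels_perm s'"
    using assms(1) ls unfolding sq_inv_def labels_perm_def by auto
  moreover have "sq_sorted (map snd s')"
    using assms(1) adj(3-5) unfolding sq_inv_def sq_sorted_def ls precedes_swap_adjacent[OF adj(8)]
    by auto
  moreover have "snd (fst q) = positive (snd q) \<and> int (fst (fst q)) = init_value (snd q) + shift * gain s' (snd q)"
    if "q \<in> set s'" for q
  proof (cases "q \<in> set u \<union> set v")
    case True
    then have "q \<in> set s" "snd q \<noteq> l" "snd q \<noteq> m"
      using assms(2) adj(8) by (auto simp: image_iff)
    then show ?thesis using assms(1) gain(3) unfolding sq_inv_def by auto
  next
    case False
    then have "q = ((b', True), m) \<or> q = ((a', False), l)"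
      using that assms(3) by auto
    then show ?thesis using adj gain(1,2) assms(4,5) by auto
  qed
  ultimately show ?thesis unfolding sq_inv_def by blast
qed

lemma sq_step_preserves_sq_inv: "sq_step p s s' \<Longrightarrow> sq_inv s \<Longrightarrow> sq_inv s'"
proof (induction rule: sq_step.induct)
  case (gt a b u l m v)
  note adj = sq_inv_adjacent[OF gt.prems HOL.refl]
  have "level m < level l"
    using sq_indices_order_levels(1)[OF gt.prems HOL.refl] gt.hyps by auto
  then show ?case
    by (intro sq_inv_swap[OF gt.prems HOL.refl HOL.refl])
      (use adj p_ge_2 in \<open>auto simp: shift_def algebra_simps of_nat_diff\<close>)
next
  case (lt a b u l m v)
  note adj = sq_inv_adjacent[OF lt.prems HOL.refl]
  have "level l < level m"
    using sq_indices_order_levels(2)[OF lt.prems HOL.refl] lt.hyps by auto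
  then show ?case
    by (intro sq_inv_swap[OF lt.prems HOL.refl HOL.refl])
      (use adj p_ge_2 in \<open>auto simp: shift_def algebra_simps of_nat_diff\<close>)
next
  case (eq a b u l m v)
  note adj = sq_inv_adjacent[OF eq.prems[unfolded eq.hyps] HOL.refl]
  have "level l = level m"
    using sq_indices_order_levels(3)[OF eq.prems[unfolded eq.hyps] HOL.refl] by auto
  then show ?case
    using sq_inv_swap[OF eq.prems[unfolded eq.hyps] HOL.refl HOL.refl, of b b] adj eq.hyps by auto
qed

lemma sq_steps_preserve_sq_inv: "(sq_step p)\<^sup>*\<^sup>* s s' \<Longrightarrow> sq_inv s \<Longrightarrow> sq_inv s'"
  by (induction rule: rtranclp_induct) (auto intro: sq_step_preserves_sq_inv)

lemma sq_normal_positive_first: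
  assumes "sq_inv s" "\<not> (\<exists>s'. sq_step p s s')" "x \<in> {1..d}" "y \<in> {1..d}" "positive x" "\<not> positive y"
  shows "precedes (map snd s) x y"
proof (rule ccontr)
  assume "\<not> precedes (map snd s) x y"
  moreover have "x \<noteq> y" using assms by auto
  ultimately have "precedes (map snd s) y x"
    using precedes_total[of x "map snd s" y] assms(1,3,4) unfolding sq_inv_def labels_perm_def by auto
  moreover have "\<forall>q\<in>set s. snd q = y \<longrightarrow> \<not> snd (fst q)" "\<forall>q\<in>set s. snd q = x \<longrightarrow> snd (fst q)"
    using assms(1,5,6) unfolding sq_inv_def by auto
  ultimately obtain u q1 q2 v where s: "s = u @ [q1, q2] @ v" "\<not> snd (fst q1)" "snd (fst q2)"
    using precedes_imp_adjacent_switch[of snd s y x "\<lambda>q. snd (fst q)"] by blast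
  obtain a l where q1: "q1 = ((a, False), l)" using s(2) by (cases q1) auto
  obtain b m where q2: "q2 = ((b, True), m)" using s(3) by (cases q2) auto
  have "\<exists>s'. sq_step p s s'"
    using sq_step.lt[of a b p u l m v] sq_step.eq[of a b p u l m v] sq_step.gt[of b a p u l m v]
    unfolding s(1) q1 q2 by (cases a b rule: linorder_cases) auto
  with assms(2) show False by blast
qed

lemma sq_inv_witness: "sq_inv (label witness)"
proof -
  have lw: "label witness = map (\<lambda>l. ((nat (init_value l), positive l), l)) [1..<Suc d]"
    unfolding label_def witness_def by (simp add: zip_map1 zip_same_conv_map)
  then have ls: "map snd (label witness) = [1..<Suc d]"
    by (simp add: o_def del: upt_Suc)
  have "gain (label witness) l = 0" for l
    unfolding gain_def inverted_def ls precedes_upt by auto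
  moreover have "labels_perm (label witness)" "sq_sorted (map snd (label witness))"
    unfolding labels_perm_def sq_sorted_def ls precedes_upt by auto
  ultimately show ?thesis
    unfolding sq_inv_def lw using init_value_nonneg by auto
qed

subsection \<open>The second phase\<close>

text \<open>
  After the first phase every letter has crossed exactly the opposite-sign letters of lower
  level that stood on its wrong side, which gives \<open>mid_value\<close>. In a \<open>\<rightarrowtail>\<close>-step the letter of
  higher level loses \<open>p - 1\<close>; \<open>loss\<close> counts the same-sign letters of lower level crossed.
\<close>

definition "mid_value l =
  init_value l + shift * (\<Sum>r<level l. of_bool (if positive l then neg_at r < l else l < pos_at r) :: int)"
definition "same_at l r = (if positive l then pos_at r else neg_at r)"
definition "loss s l = (\<Sum>r<level l. of_bool (inverted (map snd s) l (same_at l r)) :: int)"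

definition "tl_sorted ls \<longleftrightarrow>
  (\<forall>a\<in>{1..d}. \<forall>b\<in>{1..d}. positive a \<longrightarrow> \<not> positive b \<longrightarrow> precedes ls a b) \<and>
  (\<forall>a\<in>{1..d}. \<forall>b\<in>{1..d}. positive a = positive b \<longrightarrow> a < b \<longrightarrow> precedes ls b a \<longrightarrow>
     (if positive a then level a < level b else level b < level a))"

definition tl_inv :: "lword \<Rightarrow> bool" where
  "tl_inv s \<longleftrightarrow> labels_perm s \<and> tl_sorted (map snd s) \<and>
    (\<forall>q\<in>set s. snd (fst q) = positive (snd q) \<and>
       int (fst (fst q)) = mid_value (snd q) - shift * loss s (snd q))"

lemma in_window_mid_value:
  assumes "l \<in> {1..d}"
  shows "in_window l (mid_value l - shift * loss s l)"
proof -
  define g where "g = (\<Sum>r<level l. of_bool (if positive l then neg_at r < l else l < pos_at r) :: int)"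
  have "0 \<le> g \<and> g \<le> int (level l)" "0 \<le> loss s l \<and> loss s l \<le> int (level l)"
    unfolding g_def loss_def by (rule sum_of_bool_bounds)+
  then have "in_window l (init_value l + shift * g - shift * loss s l)"
    using in_window_init_value[OF assms] by auto
  then show ?thesis unfolding mid_value_def g_def by simp
qed

lemma gain_sq_normal:
  assumes "sq_inv s" "\<not> (\<exists>s'. sq_step p s s')" "l \<in> {1..d}"
  shows "gain s l = (\<Sum>r<level l. of_bool (if positive l then neg_at r < l else l < pos_at r))"
  unfolding gain_def
proof (intro sum.cong HOL.refl)
  fix r assume "r \<in> {..<level l}"
  then have "r < k" using level_less assms(3) by force
  have ds: "distinct (map snd s)"
    using assms(1) unfolding sq_inv_def labels_perm_def by auto
  show "of_bool (inverted (map snd s) l (opposite_at l r)) =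
        (of_bool (if positive l then neg_at r < l else l < pos_at r) :: int)"
  proof (cases "positive l")
    case True
    then have "precedes (map snd s) l (neg_at r)"
      using sq_normal_positive_first[OF assms(1,2,3)] neg_at[OF \<open>r < k\<close>] by auto
    then show ?thesis
      using True precedes_asym[OF ds] unfolding inverted_def opposite_at_def by auto
  next
    case False
    then have "precedes (map snd s) (pos_at r) l"
      using sq_normal_positive_first[OF assms(1,2) _ assms(3)] pos_at[OF \<open>r < k\<close>] by auto
    then show ?thesis
      using False precedes_asym[OF ds] unfolding inverted_def opposite_at_def by auto
  qed
qed

lemma tl_inv_sq_normal:
  assumes "sq_inv s" "\<not> (\<exists>s'. sq_step p s s')"
  shows "tl_inv s"
proof -
  have ds: "distinct (map snd s)"
    using assms(1) unfolding sq_inv_def labels_perm_def by auto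
  have ord: "precedes (map snd s) a b" if "a \<in> {1..d}" "b \<in> {1..d}" "a < b" "positive a = positive b" for a b
    using assms(1) that unfolding sq_inv_def sq_sorted_def by auto
  have mid: "mid_value l = init_value l + shift * gain s l" if "l \<in> {1..d}" for l
    unfolding mid_value_def gain_sq_normal[OF assms that] ..
  have no_loss: "loss s l = 0" if "l \<in> {1..d}" for l
  proof -
    have "\<not> inverted (map snd s) l (same_at l r)" if "r < level l" for r
    proof -
      have "r < k" using that level_less \<open>l \<in> {1..d}\<close> by force
      then have "same_at l r \<in> {1..d}" "positive (same_at l r) = positive l"
        using pos_at neg_at unfolding same_at_def by auto
      then show ?thesis
        unfolding inverted_def using ord \<open>l \<in> {1..d}\<close> precedes_asym[OF ds] by (metis linorder_neqE_nat)
    qed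
    then show ?thesis unfolding loss_def by auto
  qed
  have "tl_sorted (map snd s)"
    unfolding tl_sorted_def using sq_normal_positive_first[OF assms] ord precedes_asym[OF ds] by blast
  moreover have "snd (fst q) = positive (snd q) \<and> int (fst (fst q)) = mid_value (snd q) - shift * loss s (snd q)"
    if "q \<in> set s" for q
  proof -
    have "snd q \<in> {1..d}"
      using that assms(1) unfolding sq_inv_def labels_perm_def by auto
    with that show ?thesis
      using assms(1) mid no_loss unfolding sq_inv_def by auto
  qed
  ultimately show ?thesis
    using assms(1) unfolding sq_inv_def tl_inv_def by auto
qed

lemma tl_inv_adjacent:
  assumes "tl_inv s" "s = u @ [((a, e), l), ((b, e), m)] @ v"
  shows "l \<in> {1..d}" "m \<in> {1..d}" "positive l = e" "positive m = e" "level l \<noteq> level m"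
    "int a = mid_value l - shift * loss s l" "int b = mid_value m - shift * loss s m"
    "distinct (map snd u @ [l, m] @ map snd v)" "precedes (map snd s) l m"
proof -
  show ds: "distinct (map snd u @ [l, m] @ map snd v)"
    and lm: "l \<in> {1..d}" "m \<in> {1..d}"
    using assms unfolding tl_inv_def labels_perm_def by (auto simp: image_iff)
  show sg: "positive l = e" "positive m = e"
    and "int a = mid_value l - shift * loss s l" "int b = mid_value m - shift * loss s m"
    using assms unfolding tl_inv_def by auto
  show "level l \<noteq> level m"
    using ds eq_if_same_sign_same_level[OF lm] sg by auto
  show "precedes (map snd s) l m"
    using assms(2) by (simp add: precedes_append)
qed

lemma loss_tl_swap:
  assumes "tl_inv s" "s = u @ [((a, e), l), ((b, e), m)] @ v"
    "s' = u @ [((b', e), m), ((a', e), l)] @ v" "l < m"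
  shows "loss s' l = loss s l + of_bool (level m < level l)"
    and "loss s' m = loss s m + of_bool (level l < level m)"
    and "z \<noteq> l \<Longrightarrow> z \<noteq> m \<Longrightarrow> loss s' z = loss s z"
proof -
  note adj = tl_inv_adjacent[OF assms(1,2)]
  have ls: "map snd s = map snd u @ [l, m] @ map snd v" "map snd s' = map snd u @ [m, l] @ map snd v"
    using assms(2,3) by auto
  have swap: "inverted (map snd s') x y \<longleftrightarrow> inverted (map snd s) x y \<or> (x = l \<and> y = m) \<or> (x = m \<and> y = l)"
    for x y
    unfolding ls using inverted_swap_adjacent[OF adj(8) assms(4)] by auto
  have not_inv: "\<not> inverted (map snd s) l m" "\<not> inverted (map snd s) m l"
    unfolding ls using not_inverted_adjacent[OF adj(8) assms(4)] inverted_sym by blast+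
  have "level l < k" "level m < k" using adj level_less by auto
  have same_at_eq: "same_at l r = m \<longleftrightarrow> r = level m" "same_at m r = l \<longleftrightarrow> r = level l" if "r < k" for r
    using pos_at_eq_iff[OF that] neg_at_eq_iff[OF that] adj(1-4) unfolding same_at_def by auto
  show "loss s' l = loss s l + of_bool (level m < level l)"
    unfolding loss_def
  proof (rule sum_of_bool_add_index)
    fix r assume "r < level l"
    then have "same_at l r \<noteq> l"
      using pos_at[of r] neg_at[of r] \<open>level l < k\<close> unfolding same_at_def by auto
    then show "inverted (map snd s') l (same_at l r) \<longleftrightarrow> inverted (map snd s) l (same_at l r) \<or> r = level m"
      using swap same_at_eq[of r] \<open>r < level l\<close> \<open>level l < k\<close> by auto
  next
    show "\<not> inverted (map snd s) l (same_at l (level m))"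
      using not_inv same_at_eq[of "level m"] \<open>level m < k\<close> by auto
  qed
  show "loss s' m = loss s m + of_bool (level l < level m)"
    unfolding loss_def
  proof (rule sum_of_bool_add_index)
    fix r assume "r < level m"
    then have "same_at m r \<noteq> m"
      using pos_at[of r] neg_at[of r] \<open>level m < k\<close> unfolding same_at_def by auto
    then show "inverted (map snd s') m (same_at m r) \<longleftrightarrow> inverted (map snd s) m (same_at m r) \<or> r = level l"
      using swap same_at_eq[of r] \<open>r < level m\<close> \<open>level m < k\<close> by auto
  next
    show "\<not> inverted (map snd s) m (same_at m (level l))"
      using not_inv same_at_eq[of "level l"] \<open>level l < k\<close> by auto
  qed
  show "z \<noteq> l \<Longrightarrow> z \<noteq> m \<Longrightarrow> loss s' z = loss s z"
    unfolding loss_def using swap by auto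
qed

lemma tl_inv_swap:
  assumes "tl_inv s" "s = u @ [((a, e), l), ((b, e), m)] @ v"
    "s' = u @ [((b', e), m), ((a', e), l)] @ v" "l < m"
    "if e then level l < level m else level m < level l"
    "int a' = mid_value l - shift * (loss s l + of_bool (level m < level l))"
    "int b' = mid_value m - shift * (loss s m + of_bool (level l < level m))"
  shows "tl_inv s'"
proof -
  note adj = tl_inv_adjacent[OF assms(1,2)]
  note loss = loss_tl_swap[OF assms(1-4)]
  have ls: "map snd s = map snd u @ [l, m] @ map snd v" "map snd s' = map snd u @ [m, l] @ map snd v"
    using assms(2,3) by auto
  have "labels_perm s'"
    using assms(1) ls unfolding tl_inv_def labels_perm_def by auto
  moreover have "tl_sorted (map snd s')"
    using assms(1,4,5) adj(3,4) unfolding tl_inv_def tl_sorted_def ls precedes_swap_adjacent[OF adj(8)]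
    by (smt (verit, best) order_less_asym)
  moreover have "snd (fst q) = positive (snd q) \<and> int (fst (fst q)) = mid_value (snd q) - shift * loss s' (snd q)"
    if "q \<in> set s'" for q
  proof (cases "q \<in> set u \<union> set v")
    case True
    then have "q \<in> set s" "snd q \<noteq> l" "snd q \<noteq> m"
      using assms(2) adj(8) by (auto simp: image_iff)
    then show ?thesis using assms(1) loss(3) unfolding tl_inv_def by auto
  next
    case False
    then have "q = ((b', e), m) \<or> q = ((a', e), l)"
      using that assms(3) by auto
    then show ?thesis using adj loss(1,2) assms(6,7) by auto
  qed
  ultimately show ?thesis unfolding tl_inv_def by blast
qed

lemma tl_adjacent_separation:
  assumes "tl_inv s" "s = u @ [((a, e), l), ((b, e), m)] @ v"
  shows "level l < level m \<Longrightarrow> a + p - 1 < b" "level m < level l \<Longrightarrow> b + p - 1 < a"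
proof -
  note adj = tl_inv_adjacent[OF assms]
  have windows: "in_window l (int a)" "in_window m (int b)"
    using adj in_window_mid_value by auto
  show "a + p - 1 < b" if "level l < level m"
    using window_separation[OF adj(2,1) that windows(2,1)] p_ge_2 unfolding shift_def by auto
  show "b + p - 1 < a" if "level m < level l"
    using window_separation[OF adj(1,2) that windows(1,2)] p_ge_2 unfolding shift_def by auto
qed

lemma tl_adjacent_less:
  assumes "tl_inv s" "s = u @ [((a, e), l), ((b, e), m)] @ v"
    "if e then level l < level m else level m < level l"
  shows "l < m"
proof -
  note adj = tl_inv_adjacent[OF assms(1,2)]
  have "m < l \<longrightarrow> (if positive m then level m < level l else level l < level m)"
    using assms(1) adj(1-4,9) unfolding tl_inv_def tl_sorted_def by blast
  then have "\<not> m < l"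
    using assms(3) adj(4) by (auto split: if_splits)
  moreover have "l \<noteq> m" using adj(8) by auto
  ultimately show ?thesis by simp
qed

lemma tl_step_preserves_tl_inv: "tl_step p s s' \<Longrightarrow> tl_inv s \<Longrightarrow> tl_inv s'"
proof (induction rule: tl_step.induct)
  case (pos a b u l m v)
  note adj = tl_inv_adjacent[OF pos.prems HOL.refl]
  have "\<not> level m < level l"
    using tl_adjacent_separation(2)[OF pos.prems HOL.refl] pos.hyps p_ge_2 by auto
  with adj(5) have "level l < level m" by auto
  moreover have "l < m"
    using tl_adjacent_less[OF pos.prems HOL.refl] calculation by simp
  ultimately show ?case
    by (intro tl_inv_swap[OF pos.prems HOL.refl HOL.refl])
      (use adj p_ge_2 pos.hyps in \<open>auto simp: shift_def algebra_simps of_nat_diff\<close>)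
next
  case (neg b a u l m v)
  note adj = tl_inv_adjacent[OF neg.prems HOL.refl]
  have "\<not> level l < level m"
    using tl_adjacent_separation(1)[OF neg.prems HOL.refl] neg.hyps p_ge_2 by auto
  with adj(5) have "level m < level l" by auto
  moreover have "l < m"
    using tl_adjacent_less[OF neg.prems HOL.refl] calculation by simp
  ultimately show ?case
    by (intro tl_inv_swap[OF neg.prems HOL.refl HOL.refl])
      (use adj p_ge_2 neg.hyps in \<open>auto simp: shift_def algebra_simps of_nat_diff\<close>)
qed

lemma tl_steps_preserve_tl_inv: "(tl_step p)\<^sup>*\<^sup>* s s' \<Longrightarrow> tl_inv s \<Longrightarrow> tl_inv s'"
  by (induction rule: rtranclp_induct) (auto intro: tl_step_preserves_tl_inv)

lemma tl_normal_adjacent: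
  assumes "tl_inv u" "\<not> (\<exists>u'. tl_step p u u')" "u = pre @ [((a, e), l), ((b, e), m)] @ post"
  shows "if e then level m < level l else level l < level m"
proof (cases e)
  case True
  have "\<not> level l < level m"
    using tl_adjacent_separation(1)[OF assms(1,3)] tl_step.pos[of a p b pre l m post] assms(2,3) True
    by auto
  with True show ?thesis using tl_inv_adjacent(5)[OF assms(1,3)] by auto
next
  case False
  have "\<not> level m < level l"
    using tl_adjacent_separation(2)[OF assms(1,3)] tl_step.neg[of b p a pre l m post] assms(2,3) False
    by auto
  with False show ?thesis using tl_inv_adjacent(5)[OF assms(1,3)] by auto
qed

lemma tl_normal_precedes:
  assumes inv: "tl_inv u" and nf: "\<not> (\<exists>u'. tl_step p u u')" and ab: "a \<in> {1..d}" "b \<in> {1..d}"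
    and sign: "positive a = positive b"
    and lev: "if positive a then level b < level a else level a < level b"
  shows "precedes (map snd u) a b"
proof (rule ccontr)
  assume "\<not> precedes (map snd u) a b"
  moreover have "a \<noteq> b" using lev by auto
  ultimately have "precedes (map snd u) b a"
    using precedes_total[of a "map snd u" b] inv ab unfolding tl_inv_def labels_perm_def by auto
  define f where "f q \<longleftrightarrow> (if positive a then positive (snd q) \<and> level a \<le> level (snd q)
                             else positive (snd q) \<or> level (snd q) \<le> level a)" for q :: "letter \<times> nat"
  have "\<forall>q\<in>set u. snd q = b \<longrightarrow> \<not> f q" "\<forall>q\<in>set u. snd q = a \<longrightarrow> f q"
    using sign lev unfolding f_def by auto
  then obtain pre x y post where u: "u = pre @ [x, y] @ post" "\<not> f x" "f y"
    using precedes_imp_adjacent_switch[of snd u b a f] \<open>precedes (map snd u) b a\<close> by blast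
  obtain i e l where x: "x = ((i, e), l)" by (cases x) auto
  obtain j e' m where y: "y = ((j, e'), m)" by (cases y) auto
  have lm: "l \<in> {1..d}" "m \<in> {1..d}" "positive l = e" "positive m = e'"
    using inv unfolding tl_inv_def labels_perm_def u(1) x y by auto
  have ds: "distinct (map snd u)"
    using inv unfolding tl_inv_def labels_perm_def by auto
  have "e = e'"
  proof (rule ccontr)
    assume "e \<noteq> e'"
    have "\<not> (\<not> e \<and> e')"
    proof
      assume "\<not> e \<and> e'"
      then have "precedes (map snd u) m l"
        using inv lm unfolding tl_inv_def tl_sorted_def by auto
      moreover have "precedes (map snd u) l m"
        unfolding u(1) x y by (simp add: precedes_append)
      ultimately show False using precedes_asym[OF ds] by blast
    qed
    with \<open>e \<noteq> e'\<close> have "e" "\<not> e'" by auto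
    then show False using u(2,3) lm unfolding x y f_def by (auto split: if_splits)
  qed
  then have "if e then level m < level l else level l < level m"
    using tl_normal_adjacent[OF inv nf, of pre i e l j m post] u(1) x y by auto
  then show False
    using u(2,3) lm \<open>e = e'\<close> unfolding x y f_def by (auto split: if_splits)
qed

definition "nf_labels = map tinv [1..<Suc d]"
definition "final_value r = anchor r + shift * final_corr r"

lemma nf_labels_nth: "j < d \<Longrightarrow> nf_labels ! j = tinv (Suc j)"
  unfolding nf_labels_def by (simp del: upt_Suc)

lemma length_nf_labels: "length nf_labels = d"
  unfolding nf_labels_def by simp

lemma distinct_nf_labels: "distinct nf_labels"
  unfolding nf_labels_def distinct_map
  by (simp del: upt_Suc add: atLeastLessThanSuc_atLeastAtMost) (metis inj_onI t_tinv)

lemma set_nf_labels: "set nf_labels = {1..d}"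
proof -
  have "tinv ` {1..d} = {1..d}"
    using tinv_in_range t_in_range by (auto intro: image_eqI[of _ tinv, OF tinv_t[symmetric]])
  then show ?thesis
    unfolding nf_labels_def by (simp del: upt_Suc add: atLeastLessThanSuc_atLeastAtMost)
qed

lemma precedes_nf_labels: "precedes nf_labels a b \<longleftrightarrow> a \<in> {1..d} \<and> b \<in> {1..d} \<and> t a < t b"
proof
  assume "precedes nf_labels a b"
  then obtain i j where ij: "i < j" "j < d" "nf_labels ! i = a" "nf_labels ! j = b"
    using precedes_nth_iff length_nf_labels by metis
  then have "a = tinv (Suc i)" "b = tinv (Suc j)" "Suc i \<in> {1..d}" "Suc j \<in> {1..d}"
    using nf_labels_nth by auto
  with ij show "a \<in> {1..d} \<and> b \<in> {1..d} \<and> t a < t b"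
    using tinv_in_range by auto
next
  assume ab: "a \<in> {1..d} \<and> b \<in> {1..d} \<and> t a < t b"
  then have "t a \<in> {1..d}" "t b \<in> {1..d}"
    using t_in_range by auto
  then have "nf_labels ! (t a - 1) = a" "nf_labels ! (t b - 1) = b"
    using nf_labels_nth by auto
  with ab \<open>t a \<in> {1..d}\<close> \<open>t b \<in> {1..d}\<close> show "precedes nf_labels a b"
    unfolding precedes_nth_iff length_nf_labels by (intro exI[of _ "t a - 1"] exI[of _ "t b - 1"]) auto
qed

lemma nf_labels_by_level: "nf_labels = map pos_at (rev [0..<k]) @ map neg_at [0..<k]"
proof (rule nth_equalityI)
  show "length nf_labels = length (map pos_at (rev [0..<k]) @ map neg_at [0..<k])"
    using length_nf_labels d_eq by simp
  fix j assume "j < length nf_labels"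
  then have "j < d" using length_nf_labels by simp
  show "nf_labels ! j = (map pos_at (rev [0..<k]) @ map neg_at [0..<k]) ! j"
  proof (cases "j < k")
    case True
    then have "(map pos_at (rev [0..<k]) @ map neg_at [0..<k]) ! j = tinv (Suc j)"
      unfolding pos_at_def by (simp add: nth_append rev_nth Suc_diff_Suc)
    then show ?thesis using nf_labels_nth \<open>j < d\<close> by simp
  next
    case False
    moreover have "j - k < k" using \<open>j < d\<close> d_eq by simp
    ultimately have "(map pos_at (rev [0..<k]) @ map neg_at [0..<k]) ! j = tinv (Suc j)"
      unfolding neg_at_def by (simp add: nth_append)
    then show ?thesis using nf_labels_nth \<open>j < d\<close> by simp
  qed
qed

lemma tl_normal_labels:
  assumes "tl_inv u" "\<not> (\<exists>u'. tl_step p u u')"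
  shows "map snd u = nf_labels"
proof -
  have ds: "distinct (map snd u)" and st: "set (map snd u) = {1..d}"
    using assms(1) unfolding tl_inv_def labels_perm_def by auto
  have "precedes (map snd u) a b" if ab: "a \<in> {1..d}" "b \<in> {1..d}" "t a < t b" for a b
  proof -
    have "t a \<in> {1..d}" "t b \<in> {1..d}" using t_in_range ab by auto
    consider "positive a = positive b" | "positive a" "\<not> positive b" | "\<not> positive a" "positive b"
      by blast
    then show ?thesis
    proof cases
      case 1
      then have "if positive a then level b < level a else level a < level b"
        using ab(3) \<open>t a \<in> {1..d}\<close> \<open>t b \<in> {1..d}\<close> unfolding positive_def level_def by auto
      with 1 show ?thesis using tl_normal_precedes[OF assms ab(1,2)] by blast
    next
      case 2
      then show ?thesis using assms(1) ab unfolding tl_inv_def tl_sorted_def by blast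
    next
      case 3
      then show ?thesis using ab(3) unfolding positive_def by auto
    qed
  qed
  then have "precedes (map snd u) a b \<longleftrightarrow> precedes nf_labels a b" for a b
    using precedes_in_set[of "map snd u" a b] precedes_asym[OF ds] precedes_irrefl[OF ds] st
    unfolding precedes_nf_labels by (metis linorder_neqE_nat tinv_t)
  then show ?thesis
    using list_eq_iff_precedes ds st distinct_nf_labels set_nf_labels by metis
qed

lemma pos_fun_nf_labels:
  assumes "map snd u = nf_labels"
  shows "pos_fun u = t"
proof
  fix l
  have len: "length u = d" using assms length_nf_labels by (metis length_map)
  have label: "snd (u ! j) = tinv (Suc j)" if "j < d" for j
    using assms nf_labels_nth len that by (metis nth_map)
  show "pos_fun u l = t l"
  proof (cases "l \<in> {1..d}")
    case True
    then have "t l \<in> {1..d}" using t_in_range by auto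
    then have at: "t l - 1 < length u \<and> snd (u ! (t l - 1)) = l"
      using label len by auto
    have "(THE j. j < length u \<and> snd (u ! j) = l) = t l - 1"
    proof (rule the_equality)
      fix j assume "j < length u \<and> snd (u ! j) = l"
      then have "Suc j = t l" using label len by (metis t_tinv)
      then show "j = t l - 1" by auto
    qed (rule at)
    then show ?thesis unfolding pos_fun_def using at \<open>t l \<in> {1..d}\<close> by auto
  next
    case False
    then have "\<not> (\<exists>j<length u. snd (u ! j) = l)"
      using label len tinv_in_range by (metis Suc_leI atLeastAtMost_iff le_add1 plus_1_eq_Suc)
    then show ?thesis unfolding pos_fun_def using False permutes_not_in[OF t_permutes] by auto
  qed
qed
lemma mid_value_minus_final_loss:
  assumes "l \<in> {1..d}"
  shows "mid_value l - shift * (\<Sum>r<level l. of_bool (if positive l then pos_at r < l else l < neg_at r))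
           = final_value (level l)"
proof (cases "positive l")
  case True
  then have "pos_at (level l) = l" using pos_at_level assms by simp
  then show ?thesis
    using True unfolding mid_value_def init_value_def final_value_def final_corr_def
    by (simp add: sum_subtractf algebra_simps)
next
  case False
  then have "neg_at (level l) = l" using neg_at_level assms by simp
  then show ?thesis
    using False unfolding mid_value_def init_value_def final_value_def neg_corr_def
    by (simp add: sum_subtractf algebra_simps)
qed

lemma tl_normal_loss:
  assumes "tl_inv u" "\<not> (\<exists>u'. tl_step p u u')" "l \<in> {1..d}"
  shows "loss u l = (\<Sum>r<level l. of_bool (if positive l then pos_at r < l else l < neg_at r))"
  unfolding loss_def
proof (intro sum.cong HOL.refl)
  fix r assume "r \<in> {..<level l}"
  then have "r < level l" "level l < k" using level_less assms(3) by auto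
  have ds: "distinct (map snd u)"
    using assms(1) unfolding tl_inv_def labels_perm_def by auto
  note order = precedes_nf_labels[folded tl_normal_labels[OF assms(1,2)]]
  show "of_bool (inverted (map snd u) l (same_at l r)) =
        (of_bool (if positive l then pos_at r < l else l < neg_at r) :: int)"
  proof (cases "positive l")
    case True
    then have "t l = k - level l" using pos_at(4) \<open>level l < k\<close> pos_at_level assms(3) by metis
    then have "precedes (map snd u) l (pos_at r)"
      using order pos_at[of r] \<open>r < level l\<close> \<open>level l < k\<close> assms(3) by auto
    then show ?thesis
      using True precedes_asym[OF ds] unfolding inverted_def same_at_def by auto
  next
    case False
    then have "t l = Suc (k + level l)" using neg_at(4) \<open>level l < k\<close> neg_at_level assms(3) by metis
    then have "precedes (map snd u) (neg_at r) l"
      using order neg_at[of r] \<open>r < level l\<close> \<open>level l < k\<close> assms(3) by auto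
    then show ?thesis
      using False precedes_asym[OF ds] unfolding inverted_def same_at_def by auto
  qed
qed

lemma tl_normal_letter:
  assumes "tl_inv u" "\<not> (\<exists>u'. tl_step p u u')" "q \<in> set u"
  shows "fst q = (nat (final_value (level (snd q))), positive (snd q))"
proof -
  have "snd q \<in> {1..d}"
    using assms(1,3) unfolding tl_inv_def labels_perm_def by auto
  then have "int (fst (fst q)) = final_value (level (snd q))"
    using assms(1,3) tl_normal_loss[OF assms(1,2)] mid_value_minus_final_loss
    unfolding tl_inv_def by auto
  moreover have "snd (fst q) = positive (snd q)"
    using assms(1,3) unfolding tl_inv_def by auto
  ultimately show ?thesis by (simp add: prod_eq_iff)
qed

lemma tl_normal_word:
  assumes "tl_inv u" "\<not> (\<exists>u'. tl_step p u u')"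
  shows "map fst u = map (\<lambda>i. (i, True)) (rev (map (\<lambda>r. nat (final_value r)) [0..<k]))
                     @ map (\<lambda>i. (i, False)) (map (\<lambda>r. nat (final_value r)) [0..<k])"
proof -
  have "map fst u = map (\<lambda>l. (nat (final_value (level l)), positive l)) (map snd u)"
    using tl_normal_letter[OF assms] by simp
  also have "\<dots> = map (\<lambda>l. (nat (final_value (level l)), positive l))
                    (map pos_at (rev [0..<k]) @ map neg_at [0..<k])"
    unfolding tl_normal_labels[OF assms] nf_labels_by_level ..
  finally show ?thesis using pos_at neg_at by (simp add: rev_map[symmetric])
qed

lemma init_value_less:
  assumes "l \<in> {1..d}"
  shows "init_value l < int (c (level l)) + shift * (10 * int k + 8 * int k ^ 2)"
proof -
  have "level l < k" using level_less assms by auto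
  then have "int (level l) * (6 * (shift * int k)) \<le> (int k - 1) * (6 * (shift * int k))"
    "shift * int (level l) \<le> shift * int k" "0 < shift * int k" "0 \<le> shift * (int k * int k)"
    using shift_ge_1 by (auto intro: mult_right_mono mult_left_mono)
  then show ?thesis
    using init_value_bounds(2)[OF assms] unfolding anchor_def
    by (simp add: algebra_simps power2_eq_square)
qed

lemma NF_rel_witness:
  assumes "NF_rel p (label witness) u"
  shows "tl_inv u" "\<not> (\<exists>u'. tl_step p u u')"
proof -
  obtain v where v: "(sq_step p)\<^sup>*\<^sup>* (label witness) v" "\<not> (\<exists>v'. sq_step p v v')"
    "(tl_step p)\<^sup>*\<^sup>* v u" "\<not> (\<exists>u'. tl_step p u u')"
    using assms unfolding NF_rel_def by blast
  have "sq_inv v"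
    using sq_steps_preserve_sq_inv[OF v(1) sq_inv_witness] .
  then show "tl_inv u"
    using tl_steps_preserve_tl_inv[OF v(3) tl_inv_sq_normal[OF _ v(2)]] by blast
  show "\<not> (\<exists>u'. tl_step p u u')" by (rule v(4))
qed

lemma tau_witness: "tau p witness = t"
proof -
  obtain u where u: "NF_rel p (label witness) u"
    using exists_NF_rel p_ge_2 by blast
  have "pos_fun u' = t" if "NF_rel p (label witness) u'" for u'
    using pos_fun_nf_labels[OF tl_normal_labels[OF NF_rel_witness[OF that]]] .
  with u show ?thesis
    unfolding tau_def by (intro the_equality) blast+
qed

lemma eval_trivial_witness: "eval_trivial p witness"
proof -
  obtain u where u: "NF_rel p (label witness) u"
    using exists_NF_rel p_ge_2 by blast
  have "map fst (label witness) = witness"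
    unfolding label_def witness_def by simp
  then have "Fp_eq p witness (map fst u)"
    using NF_rel_Fp_eq[OF u p_ge_2] by simp
  also have "Fp_eq p \<dots> []"
    unfolding tl_normal_word[OF NF_rel_witness[OF u]] by (rule Fp_eq_nested_cancel)
  finally show ?thesis unfolding eval_trivial_def .
qed

lemma witness_in_W0_tau:
  assumes "\<And>r. r < k \<Longrightarrow> int (c r) + shift * (10 * int k + 8 * int k ^ 2) \<le> int n"
  shows "witness \<in> W0_tau p d n t"
proof -
  have "fst x < n" if "x \<in> set witness" for x
  proof -
    obtain l where l: "l \<in> {1..d}" "x = (nat (init_value l), positive l)"
      using \<open>x \<in> set witness\<close> unfolding witness_def by (force simp del: upt_Suc)
    then have "init_value l < int n"
      using init_value_less assms[OF level_less] by fastforce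
    with l show "fst x < n"
      using init_value_nonneg[OF l(1)] by (simp add: nat_less_iff)
  qed
  moreover have "length witness = d"
    unfolding witness_def by simp
  ultimately show ?thesis
    unfolding W0_tau_def W0_def using eval_trivial_witness tau_witness by auto
qed

lemma c_from_witness:
  assumes "r < k"
  shows "int (c r) = int (fst (witness ! (pos_at r - 1))) - 3 * (shift * int k) - int r * (6 * (shift * int k))"
proof -
  have "pos_at r \<in> {1..d}" "positive (pos_at r)" "level (pos_at r) = r"
    using pos_at assms by auto
  moreover have i: "pos_at r - 1 < length [1..<Suc d]" "[1..<Suc d] ! (pos_at r - 1) = pos_at r"
    using \<open>pos_at r \<in> {1..d}\<close> by (auto simp del: upt_Suc)
  ultimately have "witness ! (pos_at r - 1) = (nat (anchor r), True)"
    unfolding witness_def init_value_def using nth_map[OF i(1)] i(2) by (simp del: upt_Suc)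
  moreover have "0 \<le> anchor r"
    using shift_ge_1 unfolding anchor_def by auto
  ultimately show ?thesis unfolding anchor_def by simp
qed

end

section \<open>Counting the witnesses\<close>

definition witness_of_set :: "nat \<Rightarrow> nat \<Rightarrow> (nat \<Rightarrow> nat) \<Rightarrow> nat set \<Rightarrow> letter list" where
  "witness_of_set p d t S = witness_construction.witness p d t (\<lambda>r. sorted_list_of_set S ! r)"

lemma witness_construction_set:
  assumes "p \<ge> 2" "even d" "t permutes {1..d}" "finite S" "card S = d div 2"
  shows "witness_construction p d t (\<lambda>r. sorted_list_of_set S ! r)"
proof
  fix r r' :: nat
  assume "r' < r" "r < d div 2"
  then show "sorted_list_of_set S ! r' < sorted_list_of_set S ! r"
    using sorted_wrt_nth_less[of "(<)" "sorted_list_of_set S" r' r] assms(4,5)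
    by (simp add: strict_sorted_list_of_set)
qed (use assms in auto)

lemma witness_of_set_in_W0_tau:
  assumes "p \<ge> 2" "even d" "t permutes {1..d}" "S \<subseteq> {0..<M}" "card S = d div 2"
    and n: "n = M + (p - 1) * (10 * (d div 2) + 8 * (d div 2) ^ 2)"
  shows "witness_of_set p d t S \<in> W0_tau p d n t"
proof -
  have "finite S" using assms(4) finite_subset by blast
  interpret witness_construction p d t "\<lambda>r. sorted_list_of_set S ! r"
    using witness_construction_set[OF assms(1-3) \<open>finite S\<close> assms(5)] .
  have "int (sorted_list_of_set S ! r) + shift * (10 * int k + 8 * int k ^ 2) \<le> int n" if "r < k" for r
  proof -
    have "sorted_list_of_set S ! r \<in> S"
      using that \<open>finite S\<close> assms(5) unfolding k_def by (metis length_sorted_list_of_set nth_mem set_sorted_list_of_set)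
    then have "sorted_list_of_set S ! r < M" using assms(4) by auto
    moreover have "int ((p - 1) * (10 * k + 8 * k ^ 2)) = shift * (10 * int k + 8 * int k ^ 2)"
      using assms(1) unfolding shift_def by (simp add: of_nat_diff)
    ultimately show ?thesis unfolding n k_def by linarith
  qed
  then show ?thesis
    unfolding witness_of_set_def by (rule witness_in_W0_tau)
qed

lemma inj_on_witness_of_set:
  assumes "p \<ge> 2" "even d" "t permutes {1..d}"
  shows "inj_on (witness_of_set p d t) {S. finite S \<and> card S = d div 2}"
proof
  fix S S' :: "nat set"
  assume "S \<in> {S. finite S \<and> card S = d div 2}" "S' \<in> {S. finite S \<and> card S = d div 2}"
  then have S: "finite S" "card S = d div 2" and S': "finite S'" "card S' = d div 2" by auto
  assume eq: "witness_of_set p d t S = witness_of_set p d t S'"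
  interpret C: witness_construction p d t "\<lambda>r. sorted_list_of_set S ! r"
    using witness_construction_set[OF assms S] .
  interpret C': witness_construction p d t "\<lambda>r. sorted_list_of_set S' ! r"
    using witness_construction_set[OF assms S'] .
  have "int (sorted_list_of_set S ! r) = int (sorted_list_of_set S' ! r)" if "r < d div 2" for r
    using C.c_from_witness[of r] C'.c_from_witness[of r] that eq unfolding witness_of_set_def C.k_def
    by simp
  then have "sorted_list_of_set S = sorted_list_of_set S'"
    using S S' by (intro nth_equalityI) auto
  then show "S = S'"
    using S(1) S'(1) by (metis set_sorted_list_of_set)
qed

lemma finite_W0_tau: "finite (W0_tau p d n t)"
proof (rule finite_subset)
  show "W0_tau p d n t \<subseteq> {xs. set xs \<subseteq> {0..<n} \<times> UNIV \<and> length xs = d}"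
    unfolding W0_tau_def W0_def by auto
  show "finite {xs. set xs \<subseteq> {0..<n} \<times> (UNIV :: bool set) \<and> length xs = d}"
    by (rule finite_lists_length_eq) auto
qed

lemma threshold_eq:
  fixes d p :: nat
  assumes "even d"
  shows "d * (p - 1) + d * (4 * p - 4) + (d ^ 2 div 2) * (4 * p - 4)
           = (p - 1) * (10 * (d div 2) + 8 * (d div 2) ^ 2)"
proof -
  obtain k where "d = 2 * k" using assms by blast
  moreover have "4 * p - 4 = 4 * (p - 1)" by simp
  ultimately show ?thesis by (simp add: power2_eq_square algebra_simps)
qed

text \<open>Only \<open>n \<ge> d(p-1) + d(4p-4) + (d^2/2)(4p-4)\<close> is used; the extra \<open>d/2\<close> in the hypothesis
  merely makes the binomial coefficient positive.\<close>

theorem mainTheorem9: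
  fixes p d n :: nat and t :: "nat \<Rightarrow> nat"
  assumes "p \<ge> 2" and "even d" and "t permutes {1..d}"
    and "n > d * (p - 1) + d * (4 * p - 4) + (d ^ 2 div 2) * (4 * p - 4) + d div 2"
  shows "(n - d * (p - 1) - d * (4 * p - 4) - (d ^ 2 div 2) * (4 * p - 4)) choose (d div 2)
           \<le> N p d n t"
proof -
  define M where "M = n - d * (p - 1) - d * (4 * p - 4) - (d ^ 2 div 2) * (4 * p - 4)"
  have n: "n = M + (p - 1) * (10 * (d div 2) + 8 * (d div 2) ^ 2)"
    using assms(4) threshold_eq[OF assms(2), of p] unfolding M_def by linarith
  let ?sets = "{S. S \<subseteq> {0..<M} \<and> card S = d div 2}"
  have "M choose (d div 2) = card ?sets"
    using n_subsets[of "{0..<M}" "d div 2"] by simp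
  also have "\<dots> = card (witness_of_set p d t ` ?sets)"
    using inj_on_witness_of_set[OF assms(1-3)] finite_subset[of _ "{0..<M}"]
    by (intro card_image[symmetric]) (auto elim!: inj_on_subset)
  also have "\<dots> \<le> N p d n t"
    unfolding N_def using finite_W0_tau witness_of_set_in_W0_tau[OF assms(1-3) _ _ n]
    by (intro card_mono) auto
  finally show ?thesis unfolding M_def .
qed

end
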